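(* Let $t\ge0$, $D\ge1$, $(\tau_1,\dots,\tau_{D-1})\in\triangle_T^{(D-1)}$, $\mathrm{sgn}\in\{+,-\}^D$ and $(r^+,r^-)\in\mathcal S^2$, and let $r_f=(r_f^+,r_f^-)$ be the final state determined by $(r^+,r^-)$, $D$ and $\mathrm{sgn}$. Then $$A^{D,\mathrm{sgn}}_{(r^+,r^-)}\big(t,[\tau_1,\dots,\tau_{D-1},T-\tau_1-\dots-\tau_{D-1}]\big)=A^{D-1,\mathrm{sgn}_{1:D-1}}_{(r^+,r^-)}\big(t,[\tau_1,\dots,\tau_{D-1}]\big)\Big(-i\langle r_f^+|H_0|\hat r_f^+\rangle\,\delta^+_{\mathrm{sgn}_D}+i\langle\hat r_f^-|H_0|r_f^-\rangle\,\delta^-_{\mathrm{sgn}_D}\Big),$$ where $\mathrm{sgn}_{1:D-1}$ consists of the first $D-1$ entries of $\mathrm{sgn}$, and $\delta^{\pm}_{\mathrm{sgn}_D}$ equals $1$ if $\mathrm{sgn}_D=\pm$ and $0$ otherwise.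
   Context: Let $\mathcal S=\{-1,+1\}$, $\{|-1\rangle,|+1\rangle\}$ an orthonormal basis of $\mathbb C^2$, $H_0$ a Hermitian operator on $\mathbb C^2$, $\rho_s(0)$ a $2\times2$ complex matrix, and $T>0$. Let $\tilde\eta(\tau)=\frac1\pi\int_0^\infty J(\omega)(\coth(\beta\omega/2)\cos\omega\tau-i\sin\omega\tau)d\omega$ with $\beta>0$, $J(\omega)=\frac\pi2\sum_j\frac{c_j^2}{m_j\omega_j}\delta(\omega-\omega_j)$ ($\omega_j>0$); $\tilde\eta$ is continuous and $z^*$ is complex conjugation. For $a\in\mathcal S$ let $\hat a=-a$; for $r=(r^+,r^-)\in\mathcal S^2$ let $E(r)=\langle r^+|H_0|r^+\rangle-\langle r^-|H_0|r^-\rangle$. For $L>0$, $D\ge0$: $\triangle_L^{(D)}=\{(\tau_1,\dots,\tau_D):\tau_k>0,\sum\tau_k<L\}$ (a single point if $D=0$, integration over it meaning evaluation). Path segments: given $r_0\in\mathcal S^2$, $D\ge0$, $\mathrm{sgn}\in\{+,-\}^D$, define $r_1,\dots,r_D$ by: $r_j$ is $r_{j-1}$ with its $+$ component flipped ($a\mapsto\hat a$) if $\mathrm{sgn}_j=+$, or its $-$ component flipped if $\mathrm{sgn}_j=-$; the final state is $r_f=r_D$. For $\boldsymbol\tau\in\triangle_L^{(D)}$ the path segment on $[0,L)$ equals $r_d$ on $[\sum_{k\le d}\tau_k,\sum_{k\le d+1}\tau_k)$ ($0\le d<D$) and $r_D$ on $[\sum_{k\le D}\tau_k,L)$. Its flip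 factors are $V_j=-i\langle r_j^+|H_0|r_{j-1}^+\rangle$ if $\mathrm{sgn}_j=+$ and $V_j=i\langle r_{j-1}^-|H_0|r_j^-\rangle$ if $\mathrm{sgn}_j=-$; its piece lengths are $\ell_0=\tau_1$, $\ell_j=\tau_{j+1}$ ($1\le j<D$), $\ell_D=L-\sum\tau_k$ ($\ell_0=L$ if $D=0$). For $t\ge0$ let $h=(h^+,h^-)$ be the path segment on $[0,T)$ with data $(r_0,D,\mathrm{sgn},\boldsymbol\tau)$ and $Y(h)=\prod_{j=0}^De^{-iE(r_j)\ell_j}\prod_{j=1}^DV_j$. For $\tilde D\ge0$, $\tilde r_0\in\mathcal S^2$, $\widetilde{\mathrm{sgn}}\in\{+,-\}^{\tilde D}$, $\tilde{\boldsymbol\tau}\in\triangle_t^{(\tilde D)}$, let $g=(g^+,g^-)$ be the path segment on $[0,t)$ with these data (states $\tilde r_j$, flip factors $\tilde V_j$, lengths $\tilde\ell_j$) and $X(g)=\langle\tilde r_0^+|\rho_s(0)|\tilde r_0^-\rangle\prod_{j=0}^{\tilde D}e^{-iE(\tilde r_j)\tilde\ell_j}\prod_{j=1}^{\tilde D}\tilde V_j$. Let $Z(g,h)=-\int_0^tdx_1\int_{\max(0,x_1-T)}^{x_1}dx_2\,(g^+(x_1)-g^-(x_1))(g^+(x_2)\tilde\eta(x_1-x_2)-g^-(x_2)\tilde\eta^*(x_1-x_2))-\int_t^{t+T}dx_1\int_{\max(0,x_1-T)}^{t}dx_2\,(h^+(x_1-t)-h^-(x_1-t))(g^+(x_2)\tilde\eta(x_1-x_2)-g^-(x_2)\tilde\eta^*(x_1-x_2))-\int_0^Tdx_1\int_0^{x_1}dx_2\,(h^+(x_1)-h^-(x_1))(h^+(x_2)\tilde\eta(x_1-x_2)-h^-(x_2)\tilde\eta^*(x_1-x_2))$.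 For $\boldsymbol\tau\in\triangle_T^{(D)}$: $A^{D,\mathrm{sgn}}_{r_0}(t,[\tau_1,\dots,\tau_D]):=\sum_{\tilde D=0}^\infty\sum_{\tilde r_0\in\mathcal S^2}\sum_{\widetilde{\mathrm{sgn}}\in\{+,-\}^{\tilde D}}\int_{\triangle_t^{(\tilde D)}}X(g)\,\mathbf 1[\tilde r_{\tilde D}=r_0]\,Y(h)\,e^{Z(g,h)}\,d\tilde{\boldsymbol\tau}$. For $\boldsymbol\tau$ in the boundary $\partial\triangle_T^{(D)}$, $A^{D,\mathrm{sgn}}_{r_0}(t,\boldsymbol\tau)$ is defined as the limit of $A^{D,\mathrm{sgn}}_{r_0}(t,\boldsymbol\tau')$ as $\boldsymbol\tau'\to\boldsymbol\tau$ within $\triangle_T^{(D)}$ (this limit exists). *)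

theory Defs
  imports "HOL-Analysis.Analysis"
begin

text \<open>Spin values S = {-1,+1}; a state r = (r+, r-) is a pair of ints in S x S.
  Matrices on C^2 in the basis |-1>, |+1> are given by their entries
  M a b = <a|M|b> for a b in S. A sign sequence sgn in {+,-}^D is a bool list
  (True = +, False = -).\<close>

definition spins :: "int set" where
  "spins = {-1, 1}"

definition hat :: "int \<Rightarrow> int" where
  "hat a = - a"

definition Eng :: "(int \<Rightarrow> int \<Rightarrow> complex) \<Rightarrow> int \<times> int \<Rightarrow> complex" where
  "Eng H r = H (fst r) (fst r) - H (snd r) (snd r)"

text \<open>Bath correlation function: J(w) = pi/2 sum_j c_j^2/(m_j w_j) delta(w - w_j),
  so the integral collapses to a finite sum over the modes j in the finite set Jm.\<close>
definition eta :: "real \<Rightarrow> 'j set \<Rightarrow> ('j \<Rightarrow> real) \<Rightarrow> ('j \<Rightarrow> real) \<Rightarrow> ('j \<Rightarrow> real)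
                   \<Rightarrow> real \<Rightarrow> complex" where
  "eta \<beta> Jm c m \<omega> \<tau> = (\<Sum>j\<in>Jm. complex_of_real (1 / pi * (pi / 2 * (c j)\<^sup>2 / (m j * \<omega> j))) *
      (complex_of_real (cosh (\<beta> * \<omega> j / 2) / sinh (\<beta> * \<omega> j / 2) * cos (\<omega> j * \<tau>))
       - \<i> * complex_of_real (sin (\<omega> j * \<tau>))))"

text \<open>Open tsimplex of dimension n, as extensional functions on {..<n}
  (tau k is tau_(k+1)); for n = 0 it is the single point.\<close>
definition tsimplex :: "real \<Rightarrow> nat \<Rightarrow> (nat \<Rightarrow> real) set" where
  "tsimplex L n = {\<tau>. \<tau> \<in> extensional {..<n} \<and> (\<forall>k<n. 0 < \<tau> k) \<and> (0 < n \<longrightarrow> sum \<tau> {..<n} < L)}"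

definition flip :: "bool \<Rightarrow> int \<times> int \<Rightarrow> int \<times> int" where
  "flip s r = (if s then (hat (fst r), snd r) else (fst r, hat (snd r)))"

fun states :: "int \<times> int \<Rightarrow> bool list \<Rightarrow> nat \<Rightarrow> int \<times> int" where
  "states r0 sg 0 = r0"
| "states r0 sg (Suc j) = flip (sg ! j) (states r0 sg j)"

definition final_state :: "int \<times> int \<Rightarrow> bool list \<Rightarrow> int \<times> int" where
  "final_state r0 sg = states r0 sg (length sg)"

text \<open>The path segment: on [sum_(k<=d) tau_k, sum_(k<=d+1) tau_k) it equals r_d.\<close>
definition path_seg :: "int \<times> int \<Rightarrow> bool list \<Rightarrow> (nat \<Rightarrow> real) \<Rightarrow> real \<Rightarrow> int \<times> int" where
  "path_seg r0 sg \<tau> x = states r0 sg (card {j \<in> {1..length sg}. (\<Sum>k<j. \<tau> k) \<le> x})"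

definition flip_factor :: "(int \<Rightarrow> int \<Rightarrow> complex) \<Rightarrow> int \<times> int \<Rightarrow> bool list \<Rightarrow> nat \<Rightarrow> complex" where
  "flip_factor H r0 sg j =
     (if sg ! (j - 1)
      then - \<i> * H (fst (states r0 sg j)) (fst (states r0 sg (j - 1)))
      else \<i> * H (snd (states r0 sg (j - 1))) (snd (states r0 sg j)))"

definition piece_len :: "real \<Rightarrow> bool list \<Rightarrow> (nat \<Rightarrow> real) \<Rightarrow> nat \<Rightarrow> real" where
  "piece_len L sg \<tau> j = (if j < length sg then \<tau> j else L - (\<Sum>k<length sg. \<tau> k))"

definition seg_amp :: "(int \<Rightarrow> int \<Rightarrow> complex) \<Rightarrow> real \<Rightarrow> int \<times> int \<Rightarrow> bool list \<Rightarrow> (nat \<Rightarrow> real) \<Rightarrow> complex" where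
  "seg_amp H L r0 sg \<tau> =
     (\<Prod>j\<in>{0..length sg}. exp (- \<i> * Eng H (states r0 sg j) * complex_of_real (piece_len L sg \<tau> j)))
     * (\<Prod>j\<in>{1..length sg}. flip_factor H r0 sg j)"

definition Yf :: "(int \<Rightarrow> int \<Rightarrow> complex) \<Rightarrow> real \<Rightarrow> int \<times> int \<Rightarrow> bool list \<Rightarrow> (nat \<Rightarrow> real) \<Rightarrow> complex" where
  "Yf H T r0 sg \<tau> = seg_amp H T r0 sg \<tau>"

definition Xf :: "(int \<Rightarrow> int \<Rightarrow> complex) \<Rightarrow> (int \<Rightarrow> int \<Rightarrow> complex) \<Rightarrow> real \<Rightarrow> int \<times> int \<Rightarrow> bool list
                  \<Rightarrow> (nat \<Rightarrow> real) \<Rightarrow> complex" where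
  "Xf H \<rho> t r0 sg \<tau> = \<rho> (fst r0) (snd r0) * seg_amp H t r0 sg \<tau>"

definition pdiff :: "int \<times> int \<Rightarrow> complex" where
  "pdiff r = of_int (fst r) - of_int (snd r)"

definition pker :: "(real \<Rightarrow> complex) \<Rightarrow> int \<times> int \<Rightarrow> real \<Rightarrow> complex" where
  "pker \<eta> r s = of_int (fst r) * \<eta> s - of_int (snd r) * cnj (\<eta> s)"

definition Zf :: "(real \<Rightarrow> complex) \<Rightarrow> real \<Rightarrow> real \<Rightarrow> (real \<Rightarrow> int \<times> int) \<Rightarrow> (real \<Rightarrow> int \<times> int) \<Rightarrow> complex" where
  "Zf \<eta> T t g h =
     - integral {0..t} (\<lambda>x1. integral {max 0 (x1 - T)..x1}
          (\<lambda>x2. pdiff (g x1) * pker \<eta> (g x2) (x1 - x2)))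
     - integral {t..t + T} (\<lambda>x1. integral {max 0 (x1 - T)..t}
          (\<lambda>x2. pdiff (h (x1 - t)) * pker \<eta> (g x2) (x1 - x2)))
     - integral {0..T} (\<lambda>x1. integral {0..x1}
          (\<lambda>x2. pdiff (h x1) * pker \<eta> (h x2) (x1 - x2)))"

definition Aamp :: "(int \<Rightarrow> int \<Rightarrow> complex) \<Rightarrow> (int \<Rightarrow> int \<Rightarrow> complex) \<Rightarrow> (real \<Rightarrow> complex) \<Rightarrow> real
                   \<Rightarrow> bool list \<Rightarrow> int \<times> int \<Rightarrow> real \<Rightarrow> (nat \<Rightarrow> real) \<Rightarrow> complex" where
  "Aamp H \<rho> \<eta> T sg r0 t \<tau> =
     (\<Sum>Dt. \<Sum>rt0\<in>spins \<times> spins. \<Sum>sgt\<in>{xs :: bool list. length xs = Dt}.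
        LINT \<tau>t : tsimplex t Dt | PiM {..<Dt} (\<lambda>_. lborel).
          Xf H \<rho> t rt0 sgt \<tau>t
          * (if final_state rt0 sgt = r0 then 1 else 0)
          * Yf H T r0 sg \<tau>
          * exp (Zf \<eta> T t (path_seg rt0 sgt \<tau>t) (path_seg r0 sg \<tau>)))"

end

theory Submission
  imports Defs
begin

(* The amplitude factorises as Y(h) times a series over the bath segments g whose terms depend
   on the system segment h only through its path.  As tau' tends to the face of the simplex on
   which the last piece length l_D = T - (tau'_1 + ... + tau'_D) vanishes, the factor
   exp (-i E(r_D) l_D) of Y(h') tends to 1, so Y(h') tends to Y of the shortened segment times
   the last flip factor V_D.  Meanwhile the path h' agrees, eventually, with the shortened path
   at every point outside the finitely many jump times.  Because eta is bounded, every integrand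
   is bounded uniformly in tau', so dominated convergence carries this pointwise convergence
   through the influence functional Z and the integrals over the bath simplices; Tannery's
   theorem, with a dominating series of exponential type C K^n / n!, carries it through the
   series over the bath segments. *)

section \<open>Integrals of bounded functions\<close>

lemma emeasure_lborel_Icc_less_top [simp]: "emeasure lborel {a..b::real} < top"
  using emeasure_lborel_cbox_finite[of a b] by simp

lemma norm_integral_Icc_le:
  fixes f :: "real \<Rightarrow> 'a::euclidean_space"
  assumes "0 \<le> B" "\<And>x. x \<in> {a..b} \<Longrightarrow> norm (f x) \<le> B" "b - a \<le> L" "0 \<le> L"
  shows "norm (integral {a..b} f) \<le> B * L"
proof (cases "f integrable_on {a..b}")
  case True
  then have "norm (integral {a..b} f) \<le> B * Henstock_Kurzweil_Integration.content {a..b}"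
    using has_integral_bound_real[of B "{}" f "integral {a..b} f" a b] assms
    by (auto simp: has_integral_integral)
  also have "\<dots> \<le> B * L"
    using assms by (intro mult_left_mono) (auto simp: content_real_if)
  finally show ?thesis .
next
  case False
  then show ?thesis using assms by (simp add: not_integrable_integral)
qed

lemma set_integrable_bounded:
  fixes f :: "'a \<Rightarrow> 'b::{banach,second_countable_topology}"
  assumes "A \<in> sets M" "emeasure M A < \<infinity>" "f \<in> borel_measurable M"
    and "\<And>x. x \<in> A \<Longrightarrow> norm (f x) \<le> B"
  shows "set_integrable M A f"
  unfolding set_integrable_def
  by (rule integrableI_bounded_set_indicator[where B=B]) (use assms in auto)

lemma norm_set_integral_le_measure:
  fixes f :: "'a \<Rightarrow> 'b::{banach,second_countable_topology}"
  assumes A: "A \<in> sets M" "emeasure M A < \<infinity>" and C: "0 \<le> C"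
    and bound: "\<And>x. x \<in> A \<Longrightarrow> norm (f x) \<le> C"
  shows "norm (LINT x:A|M. f x) \<le> C * measure M A"
proof (cases "set_integrable M A f")
  case True
  have "norm (LINT x:A|M. f x) \<le> (LINT x:A|M. norm (f x))"
    by (rule set_integral_norm_bound[OF True])
  also have "\<dots> \<le> (LINT x:A|M. C)"
  proof (rule set_integral_mono)
    show "set_integrable M A (\<lambda>x. norm (f x))"
      using True by (rule set_integrable_norm)
    show "set_integrable M A (\<lambda>x. C)"
      using A C by (intro set_integrable_bounded[where B=C]) auto
  qed (use bound in auto)
  also have "\<dots> = C * measure M A"
    using A by (simp add: set_integral_const)
  finally show ?thesis .
next
  case False
  then have "(LINT x:A|M. f x) = 0"
    unfolding set_lebesgue_integral_def set_integrable_def by (simp add: not_integrable_integral_eq)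
  then show ?thesis using C by simp
qed

lemma norm_LINT_Icc_le:
  fixes f :: "real \<Rightarrow> 'b::{banach,second_countable_topology}"
  assumes "0 \<le> B" "\<And>x. x \<in> {a..b} \<Longrightarrow> norm (f x) \<le> B" "b - a \<le> L" "0 \<le> L"
  shows "norm (LINT x:{a..b}|lborel. f x) \<le> B * L"
proof (cases "a \<le> b")
  case True
  have "norm (LINT x:{a..b}|lborel. f x) \<le> B * measure lborel {a..b}"
    using assms by (intro norm_set_integral_le_measure) auto
  also have "\<dots> \<le> B * L"
    using True assms by (intro mult_left_mono) auto
  finally show ?thesis .
next
  case False
  then show ?thesis using assms by (simp add: set_lebesgue_integral_def)
qed

lemma tendsto_set_integral_dominated:
  fixes f :: "nat \<Rightarrow> 'a \<Rightarrow> 'b::{banach,second_countable_topology}"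
  assumes A[measurable]: "A \<in> sets M" and "emeasure M A < \<infinity>"
    and [measurable]: "\<And>k. f k \<in> borel_measurable M" "g \<in> borel_measurable M"
    and bound: "\<And>k x. x \<in> A \<Longrightarrow> norm (f k x) \<le> B"
    and lim: "AE x in M. x \<in> A \<longrightarrow> (\<lambda>k. f k x) \<longlonglongrightarrow> g x"
  shows "(\<lambda>k. LINT x:A|M. f k x) \<longlonglongrightarrow> (LINT x:A|M. g x)"
  unfolding set_lebesgue_integral_def
proof (rule integral_dominated_convergence[where w="\<lambda>x. B * indicator A x"])
  show "integrable M (\<lambda>x. B * indicator A x)"
    using assms by (intro integrable_mult_right integrable_real_indicator) auto
  show "AE x in M. (\<lambda>k. indicator A x *\<^sub>R f k x) \<longlonglongrightarrow> indicator A x *\<^sub>R g x"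
    using lim by eventually_elim (auto simp: indicator_def)
  show "AE x in M. norm (indicator A x *\<^sub>R f k x) \<le> B * indicator A x" for k
    using bound by (auto simp: indicator_def)
qed measurable

lemma borel_measurable_LINT_Icc_param:
  fixes \<psi> :: "'a \<Rightarrow> real \<Rightarrow> 'b::{banach,second_countable_topology}"
  assumes [measurable]: "(\<lambda>(x, y). \<psi> x y) \<in> borel_measurable (N \<Otimes>\<^sub>M borel)"
    and [measurable]: "\<alpha> \<in> borel_measurable N" "\<beta> \<in> borel_measurable N"
  shows "(\<lambda>x. LINT y:{\<alpha> x..\<beta> x}|lborel. \<psi> x y) \<in> borel_measurable N"
proof -
  have "(\<lambda>w. indicator {\<alpha> (fst w)..\<beta> (fst w)} (snd w) *\<^sub>R \<psi> (fst w) (snd w)) \<in> borel_measurable (N \<Otimes>\<^sub>M borel)"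
  proof -
    have eq: "(\<lambda>w. indicator {\<alpha> (fst w)..\<beta> (fst w)} (snd w) *\<^sub>R \<psi> (fst w) (snd w))
      = (\<lambda>w. (if \<alpha> (fst w) \<le> snd w \<and> snd w \<le> \<beta> (fst w) then 1 else 0) *\<^sub>R (\<lambda>(x, y). \<psi> x y) w)"
      by (auto simp: indicator_def fun_eq_iff)
    show ?thesis unfolding eq by measurable
  qed
  then have "(\<lambda>(x, y). indicator {\<alpha> x..\<beta> x} y *\<^sub>R \<psi> x y) \<in> borel_measurable (N \<Otimes>\<^sub>M lborel)"
    by (subst measurable_cong_sets[OF sets_pair_measure_cong[OF refl sets_lborel] refl])
       (simp add: case_prod_beta')
  from lborel.borel_measurable_lebesgue_integral[OF this]
  show ?thesis unfolding set_lebesgue_integral_def by simp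
qed

lemma integral_iterated_eq_LINT:
  fixes c :: "real \<Rightarrow> complex" and \<psi> :: "real \<Rightarrow> real \<Rightarrow> complex"
  assumes [measurable]: "c \<in> borel_measurable borel"
    and [measurable]: "(\<lambda>(x, y). \<psi> x y) \<in> borel_measurable (borel \<Otimes>\<^sub>M borel)"
    and [measurable]: "\<alpha> \<in> borel_measurable borel" "\<beta> \<in> borel_measurable borel"
    and c_bound: "\<And>x. norm (c x) \<le> Bc" and \<psi>_bound: "\<And>x y. norm (\<psi> x y) \<le> B\<psi>"
    and width: "\<And>x. x \<in> {a..b} \<Longrightarrow> \<beta> x - \<alpha> x \<le> L" "0 \<le> L"
  shows "integral {a..b} (\<lambda>x. integral {\<alpha> x..\<beta> x} (\<lambda>y. c x * \<psi> x y))
       = (LINT x:{a..b}|lborel. c x * (LINT y:{\<alpha> x..\<beta> x}|lborel. \<psi> x y))"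
proof -
  have "0 \<le> B\<psi>" "0 \<le> Bc"
    using \<psi>_bound[of 0 0] c_bound[of 0] norm_ge_zero order_trans by blast+
  have [measurable]: "\<psi> x \<in> borel_measurable borel" for x
    using measurable_Pair2[of "\<lambda>(x, y). \<psi> x y" borel borel borel x] by simp
  have inner: "integral {\<alpha> x..\<beta> x} (\<lambda>y. c x * \<psi> x y) = c x * (LINT y:{\<alpha> x..\<beta> x}|lborel. \<psi> x y)" for x
  proof -
    have "set_integrable lborel {\<alpha> x..\<beta> x} (\<psi> x)"
      using \<psi>_bound by (intro set_integrable_bounded[where B=B\<psi>]) auto
    moreover have "set_integrable lborel {\<alpha> x..\<beta> x} (\<lambda>y. c x * \<psi> x y)"
      using \<psi>_bound
      by (intro set_integrable_bounded[where B="norm (c x) * B\<psi>"]) (auto simp: norm_mult mult_left_mono)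
    ultimately show ?thesis
      by (simp add: set_borel_integral_eq_integral(2)[symmetric] set_integral_mult_right)
  qed
  have "set_integrable lborel {a..b} (\<lambda>x. c x * (LINT y:{\<alpha> x..\<beta> x}|lborel. \<psi> x y))"
  proof (rule set_integrable_bounded[where B="Bc * (B\<psi> * L)"])
    show "(\<lambda>x. c x * (LINT y:{\<alpha> x..\<beta> x}|lborel. \<psi> x y)) \<in> borel_measurable lborel"
      using borel_measurable_LINT_Icc_param[of \<psi> borel \<alpha> \<beta>] by simp
    fix x assume "x \<in> {a..b}"
    then have "norm (LINT y:{\<alpha> x..\<beta> x}|lborel. \<psi> x y) \<le> B\<psi> * L"
      using \<open>0 \<le> B\<psi>\<close> \<psi>_bound width by (intro norm_LINT_Icc_le) auto
    then show "norm (c x * (LINT y:{\<alpha> x..\<beta> x}|lborel. \<psi> x y)) \<le> Bc * (B\<psi> * L)"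
      unfolding norm_mult using c_bound \<open>0 \<le> Bc\<close> by (intro mult_mono) auto
  qed auto
  then show ?thesis
    unfolding inner by (simp add: set_borel_integral_eq_integral(2))
qed

lemma measurable_card_Collect:
  assumes "finite A" "\<And>j. j \<in> A \<Longrightarrow> Measurable.pred M (P j)"
  shows "(\<lambda>w. card {j\<in>A. P j w}) \<in> M \<rightarrow>\<^sub>M count_space UNIV"
  using assms
proof (induction A rule: finite_induct)
  case empty
  then show ?case by simp
next
  case (insert a A)
  have "card {j\<in>insert a A. P j w} = (if P a w then 1 else 0) + card {j\<in>A. P j w}" for w
  proof -
    have "{j\<in>insert a A. P j w} = (if P a w then insert a {j\<in>A. P j w} else {j\<in>A. P j w})"
      by auto
    then show ?thesis using insert.hyps by auto
  qed
  moreover have "(\<lambda>w. (if P a w then 1 else 0) + i) \<in> M \<rightarrow>\<^sub>M count_space UNIV" for i :: nat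
    using insert.prems by measurable
  ultimately show ?case
    using measurable_compose_countable[where f="\<lambda>i w. (if P a w then 1 else 0) + i"] insert
    by simp
qed

lemma measurable_comp_count_space:
  "g \<in> M \<rightarrow>\<^sub>M count_space UNIV \<Longrightarrow> (\<lambda>w. \<phi> (g w)) \<in> borel_measurable M"
  using measurable_compose[of g M "count_space UNIV" \<phi> borel] by simp

lemma tendsto_comp_eventually_eq:
  assumes "eventually (\<lambda>k. f k = a) F"
  shows "((\<lambda>k. \<phi> (f k)) \<longlongrightarrow> \<phi> a) F"
proof (rule tendsto_eventually)
  show "eventually (\<lambda>k. \<phi> (f k) = \<phi> a) F"
    using assms by eventually_elim simp
qed

lemma tendsto_coordinate:
  fixes X :: "nat \<Rightarrow> nat \<Rightarrow> real"
  assumes "X \<longlonglongrightarrow> l"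
  shows "(\<lambda>k. X k i) \<longlonglongrightarrow> l i"
proof -
  have "isCont (\<lambda>x. x i) l"
    by (metis continuous_on_eq_continuous_at open_UNIV UNIV_I continuous_on_product_coordinates)
  from isCont_tendsto_compose[OF this assms] show ?thesis .
qed

section \<open>Spin states and paths\<close>

lemma hat_hat [simp]: "hat (hat a) = a"
  by (simp add: hat_def)

lemma hat_in_spins: "a \<in> spins \<Longrightarrow> hat a \<in> spins"
  by (auto simp: spins_def hat_def)

lemma finite_spins [simp]: "finite spins"
  by (simp add: spins_def)

lemma flip_in_spins: "r \<in> spins \<times> spins \<Longrightarrow> flip s r \<in> spins \<times> spins"
  by (cases r) (auto simp: flip_def hat_in_spins)

lemma states_in_spins: "r0 \<in> spins \<times> spins \<Longrightarrow> states r0 sg j \<in> spins \<times> spins"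
  by (induction j) (auto intro: flip_in_spins)

lemma path_seg_in_spins: "r0 \<in> spins \<times> spins \<Longrightarrow> path_seg r0 sg \<tau> x \<in> spins \<times> spins"
  unfolding path_seg_def by (rule states_in_spins)

lemma states_cong: "(\<And>k. k < j \<Longrightarrow> xs ! k = ys ! k) \<Longrightarrow> states r0 xs j = states r0 ys j"
  by (induction j) auto

lemma states_take: "j \<le> d \<Longrightarrow> states r0 (take d sg) j = states r0 sg j"
  by (rule states_cong) auto

lemma flip_factor_take: "j \<in> {1..d} \<Longrightarrow> flip_factor H r0 (take d sg) j = flip_factor H r0 sg j"
  by (auto simp: flip_factor_def states_take)

lemma flip_factor_last:
  assumes "length sg = Suc d"
  shows "flip_factor H r0 sg (Suc d) =
    (if sg ! d then - \<i> * H (fst (final_state r0 sg)) (hat (fst (final_state r0 sg))) else 0)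
    + (if \<not> sg ! d then \<i> * H (hat (snd (final_state r0 sg))) (snd (final_state r0 sg)) else 0)"
  using assms by (auto simp: flip_factor_def final_state_def flip_def)

lemma measurable_path_seg_param:
  "(\<lambda>(\<sigma>, x). path_seg r0 sg \<sigma> x)
     \<in> (Pi\<^sub>M {..<length sg} (\<lambda>_. borel) \<Otimes>\<^sub>M (borel :: real measure)) \<rightarrow>\<^sub>M count_space UNIV"
proof -
  let ?M = "Pi\<^sub>M {..<length sg} (\<lambda>_. borel :: real measure) \<Otimes>\<^sub>M (borel :: real measure)"
  have "(\<lambda>w. card {j\<in>{1..length sg}. (\<Sum>k<j. fst w k) \<le> snd w}) \<in> ?M \<rightarrow>\<^sub>M count_space UNIV"
  proof (rule measurable_card_Collect)
    fix j assume j: "j \<in> {1..length sg}"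
    have "(\<lambda>w. fst w k) \<in> borel_measurable ?M" if "k \<in> {..<j}" for k
      by measurable (use that j in auto)
    then have "(\<lambda>w. \<Sum>k<j. fst w k) \<in> borel_measurable ?M"
      by (intro borel_measurable_sum) auto
    then show "Measurable.pred ?M (\<lambda>w. (\<Sum>k<j. fst w k) \<le> snd w)"
      by measurable
  qed simp
  from measurable_compose[OF this measurable_count_space[of "states r0 sg" UNIV]]
  show ?thesis unfolding path_seg_def case_prod_beta' .
qed

lemma measurable_path_seg: "path_seg r0 sg \<tau> \<in> borel \<rightarrow>\<^sub>M count_space UNIV"
proof -
  have "(\<lambda>x. card {j\<in>{1..length sg}. (\<Sum>k<j. \<tau> k) \<le> x}) \<in> borel \<rightarrow>\<^sub>M count_space UNIV"
    by (rule measurable_card_Collect) auto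
  from measurable_compose[OF this measurable_count_space[of "states r0 sg" UNIV]]
  show ?thesis unfolding path_seg_def by (simp add: comp_def)
qed

definition spin_path :: "(real \<Rightarrow> int \<times> int) \<Rightarrow> bool" where
  "spin_path g \<longleftrightarrow> g \<in> borel \<rightarrow>\<^sub>M count_space UNIV \<and> (\<forall>x. g x \<in> spins \<times> spins)"

lemma spin_pathD:
  assumes "spin_path g"
  shows "g \<in> borel \<rightarrow>\<^sub>M count_space UNIV" "g x \<in> spins \<times> spins"
  using assms by (auto simp: spin_path_def)

lemma spin_path_path_seg: "r0 \<in> spins \<times> spins \<Longrightarrow> spin_path (path_seg r0 sg \<tau>)"
  by (simp add: spin_path_def measurable_path_seg path_seg_in_spins)

section \<open>The influence functional\<close>

lemma borel_measurable_pker: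
  fixes g :: "'a \<Rightarrow> int \<times> int"
  assumes g: "g \<in> M \<rightarrow>\<^sub>M count_space UNIV" and [measurable]: "s \<in> borel_measurable M"
    and [measurable]: "\<eta> \<in> borel_measurable borel"
  shows "(\<lambda>w. pker \<eta> (g w) (s w)) \<in> borel_measurable M"
proof -
  have [measurable]: "(\<lambda>w. complex_of_int (fst (g w))) \<in> borel_measurable M"
    "(\<lambda>w. complex_of_int (snd (g w))) \<in> borel_measurable M"
    using g by (auto intro: measurable_comp_count_space)
  have [measurable]: "cnj \<in> borel_measurable borel"
    by (intro borel_measurable_continuous_onI continuous_intros)
  show ?thesis unfolding pker_def by measurable
qed

lemma borel_measurable_pker_path:
  assumes "g \<in> borel \<rightarrow>\<^sub>M count_space UNIV" "\<eta> \<in> borel_measurable borel"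
  shows "(\<lambda>(x, y). pker \<eta> (g y) (x - y)) \<in> borel_measurable (borel \<Otimes>\<^sub>M borel)"
  using borel_measurable_pker[OF measurable_compose[OF measurable_snd assms(1)] _ assms(2),
      of "\<lambda>w. fst w - snd w"]
  by (simp add: case_prod_beta')

lemma norm_pdiff_le: "r \<in> spins \<times> spins \<Longrightarrow> norm (pdiff r) \<le> 2"
  by (cases r) (auto simp: pdiff_def spins_def)

lemma norm_pker_le:
  assumes "r \<in> spins \<times> spins" "\<And>s. norm (\<eta> s) \<le> B"
  shows "norm (pker \<eta> r s) \<le> 2 * B"
proof -
  have "norm (pker \<eta> r s) \<le> norm (of_int (fst r) * \<eta> s) + norm (of_int (snd r) * cnj (\<eta> s))"
    unfolding pker_def by (rule norm_triangle_ineq4)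
  also have "\<dots> \<le> B + B"
    using assms by (cases r) (auto simp: spins_def norm_mult)
  finally show ?thesis by simp
qed

lemma norm_Zf_le:
  assumes g: "\<And>x. g x \<in> spins \<times> spins" and h: "\<And>x. h x \<in> spins \<times> spins"
    and \<eta>_bound: "\<And>s. norm (\<eta> s) \<le> B" and t: "0 \<le> t" and T: "0 \<le> T"
  shows "norm (Zf \<eta> T t g h) \<le> 4 * B * (t * t + t * T + T * T)"
proof -
  have B: "0 \<le> B" using \<eta>_bound[of 0] norm_ge_zero order_trans by blast
  have integrand: "norm (pdiff (f1 x) * pker \<eta> (f2 y) s) \<le> 4 * B"
    if "\<And>x. f1 x \<in> spins \<times> spins" "\<And>x. f2 x \<in> spins \<times> spins" for f1 f2 :: "real \<Rightarrow> int \<times> int" and x y s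
  proof -
    have "norm (pdiff (f1 x)) * norm (pker \<eta> (f2 y) s) \<le> 2 * (2 * B)"
      using that \<eta>_bound by (intro mult_mono norm_pdiff_le norm_pker_le) auto
    then show ?thesis by (simp add: norm_mult)
  qed
  have inner_gg: "norm (integral {max 0 (x - T)..x} (\<lambda>y. pdiff (g x) * pker \<eta> (g y) (x - y))) \<le> 4 * B * t"
    if "x \<in> {0..t}" for x
    using integrand[OF g g] B that t by (intro norm_integral_Icc_le) auto
  have gg: "norm (integral {0..t} (\<lambda>x. integral {max 0 (x - T)..x} (\<lambda>y. pdiff (g x) * pker \<eta> (g y) (x - y))))
      \<le> (4 * B * t) * t"
    by (rule norm_integral_Icc_le) (use inner_gg B t in auto)
  have inner_hg: "norm (integral {max 0 (x - T)..t} (\<lambda>y. pdiff (h (x - t)) * pker \<eta> (g y) (x - y))) \<le> 4 * B * t"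
    for x
    using integrand[OF h g] B t by (intro norm_integral_Icc_le) auto
  have hg: "norm (integral {t..t + T} (\<lambda>x. integral {max 0 (x - T)..t} (\<lambda>y. pdiff (h (x - t)) * pker \<eta> (g y) (x - y))))
      \<le> (4 * B * t) * T"
    by (rule norm_integral_Icc_le) (use inner_hg B t T in auto)
  have inner_hh: "norm (integral {0..x} (\<lambda>y. pdiff (h x) * pker \<eta> (h y) (x - y))) \<le> 4 * B * T"
    if "x \<in> {0..T}" for x
    using integrand[OF h h] B that T by (intro norm_integral_Icc_le) auto
  have hh: "norm (integral {0..T} (\<lambda>x. integral {0..x} (\<lambda>y. pdiff (h x) * pker \<eta> (h y) (x - y))))
      \<le> (4 * B * T) * T"
    by (rule norm_integral_Icc_le) (use inner_hh B T in auto)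
  have triangle: "norm (- a - b - c) \<le> norm a + norm b + norm c" for a b c :: complex
    using norm_triangle_ineq4[of "- a - b" c] norm_triangle_ineq4[of "- a" b] by simp
  have "norm (Zf \<eta> T t g h) \<le> (4 * B * t) * t + (4 * B * t) * T + (4 * B * T) * T"
    unfolding Zf_def using triangle gg hg hh by (smt (verit))
  then show ?thesis by (simp add: algebra_simps)
qed

lemma norm_exp_Zf_le:
  assumes "\<And>x. g x \<in> spins \<times> spins" "\<And>x. h x \<in> spins \<times> spins"
    and "\<And>s. norm (\<eta> s) \<le> B" "0 \<le> t" "0 \<le> T"
  shows "norm (exp (Zf \<eta> T t g h)) \<le> exp (4 * B * (t * t + t * T + T * T))"
  using norm_exp[of "Zf \<eta> T t g h"] norm_Zf_le[OF assms] by (meson exp_le_cancel_iff order_trans)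

(* Zf is written with Henstock-Kurzweil integrals; its three terms are restated as Lebesgue
   integrals, for which measurability in a parameter and dominated convergence are available. *)
definition Z_gg :: "(real \<Rightarrow> complex) \<Rightarrow> real \<Rightarrow> real \<Rightarrow> (real \<Rightarrow> int \<times> int) \<Rightarrow> complex" where
  "Z_gg \<eta> T t g =
     (LINT x:{0..t}|lborel. pdiff (g x) * (LINT y:{max 0 (x - T)..x}|lborel. pker \<eta> (g y) (x - y)))"

definition Z_hg :: "(real \<Rightarrow> complex) \<Rightarrow> real \<Rightarrow> real \<Rightarrow> (real \<Rightarrow> int \<times> int) \<Rightarrow> (real \<Rightarrow> int \<times> int) \<Rightarrow> complex" where
  "Z_hg \<eta> T t g h =
     (LINT x:{t..t + T}|lborel. pdiff (h (x - t)) * (LINT y:{max 0 (x - T)..t}|lborel. pker \<eta> (g y) (x - y)))"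

definition Z_hh :: "(real \<Rightarrow> complex) \<Rightarrow> real \<Rightarrow> (real \<Rightarrow> int \<times> int) \<Rightarrow> complex" where
  "Z_hh \<eta> T h = (LINT x:{0..T}|lborel. pdiff (h x) * (LINT y:{0..x}|lborel. pker \<eta> (h y) (x - y)))"

lemma borel_measurable_pdiff_shift:
  fixes g :: "real \<Rightarrow> int \<times> int"
  assumes "g \<in> borel \<rightarrow>\<^sub>M count_space UNIV"
  shows "(\<lambda>x. pdiff (g (x - t))) \<in> borel_measurable borel"
proof -
  have "(\<lambda>x. g (x - t)) \<in> borel \<rightarrow>\<^sub>M count_space UNIV"
    by (rule measurable_compose[OF _ assms]) measurable
  then show ?thesis by (rule measurable_comp_count_space)
qed

lemma Zf_eq_LINT:
  assumes g: "spin_path g" and h: "spin_path h"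
    and \<eta>: "\<eta> \<in> borel_measurable borel" and \<eta>_bound: "\<And>s. norm (\<eta> s) \<le> B"
    and t: "0 \<le> t" and T: "0 \<le> T"
  shows "Zf \<eta> T t g h = - Z_gg \<eta> T t g - Z_hg \<eta> T t g h - Z_hh \<eta> T h"
proof -
  note g_meas = spin_pathD(1)[OF g] and h_meas = spin_pathD(1)[OF h]
  note bounds = norm_pdiff_le norm_pker_le \<eta>_bound spin_pathD(2)[OF g] spin_pathD(2)[OF h]
  have pdiff_g: "(\<lambda>x. pdiff (g x)) \<in> borel_measurable borel"
    and pdiff_h: "(\<lambda>x. pdiff (h x)) \<in> borel_measurable borel"
    by (rule measurable_comp_count_space[OF g_meas], rule measurable_comp_count_space[OF h_meas])
  have "integral {0..t} (\<lambda>x. integral {max 0 (x - T)..x} (\<lambda>y. pdiff (g x) * pker \<eta> (g y) (x - y)))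
      = Z_gg \<eta> T t g"
    unfolding Z_gg_def
    by (rule integral_iterated_eq_LINT[where c="\<lambda>x. pdiff (g x)" and \<psi>="\<lambda>x y. pker \<eta> (g y) (x - y)"
          and \<alpha>="\<lambda>x. max 0 (x - T)" and \<beta>="\<lambda>x. x" and Bc=2 and B\<psi>="2 * B" and L=t])
       (use pdiff_g borel_measurable_pker_path[OF g_meas \<eta>] bounds t
         in auto)
  moreover have "integral {t..t + T} (\<lambda>x. integral {max 0 (x - T)..t} (\<lambda>y. pdiff (h (x - t)) * pker \<eta> (g y) (x - y)))
      = Z_hg \<eta> T t g h"
    unfolding Z_hg_def
    by (rule integral_iterated_eq_LINT[where c="\<lambda>x. pdiff (h (x - t))" and \<psi>="\<lambda>x y. pker \<eta> (g y) (x - y)"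
          and \<alpha>="\<lambda>x. max 0 (x - T)" and \<beta>="\<lambda>x. t" and Bc=2 and B\<psi>="2 * B" and L=t])
       (use borel_measurable_pdiff_shift[OF h_meas] borel_measurable_pker_path[OF g_meas \<eta>] bounds t
         in auto)
  moreover have "integral {0..T} (\<lambda>x. integral {0..x} (\<lambda>y. pdiff (h x) * pker \<eta> (h y) (x - y)))
      = Z_hh \<eta> T h"
    unfolding Z_hh_def
    by (rule integral_iterated_eq_LINT[where c="\<lambda>x. pdiff (h x)" and \<psi>="\<lambda>x y. pker \<eta> (h y) (x - y)"
          and \<alpha>="\<lambda>x. 0" and \<beta>="\<lambda>x. x" and Bc=2 and B\<psi>="2 * B" and L=T])
       (use pdiff_h borel_measurable_pker_path[OF h_meas \<eta>] bounds T
         in auto)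
  ultimately show ?thesis
    unfolding Zf_def by simp
qed

lemma borel_measurable_Z_gg_Z_hg_param:
  fixes G :: "'p \<Rightarrow> real \<Rightarrow> int \<times> int"
  assumes G: "(\<lambda>w. G (fst w) (snd w)) \<in> (N \<Otimes>\<^sub>M borel) \<rightarrow>\<^sub>M count_space UNIV"
    and h: "h \<in> borel \<rightarrow>\<^sub>M count_space UNIV" and \<eta>: "\<eta> \<in> borel_measurable borel"
  shows "(\<lambda>p. Z_gg \<eta> T t (G p)) \<in> borel_measurable N"
    and "(\<lambda>p. Z_hg \<eta> T t (G p) h) \<in> borel_measurable N"
proof -
  have "(\<lambda>v. (fst (fst v), snd v)) \<in> ((N \<Otimes>\<^sub>M borel) \<Otimes>\<^sub>M borel) \<rightarrow>\<^sub>M (N \<Otimes>\<^sub>M borel)"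
    by measurable
  from measurable_compose[OF this G]
  have "(\<lambda>v. pker \<eta> (G (fst (fst v)) (snd v)) (snd (fst v) - snd v))
      \<in> borel_measurable ((N \<Otimes>\<^sub>M borel) \<Otimes>\<^sub>M borel)"
    by (intro borel_measurable_pker[OF _ _ \<eta>]) auto
  then have kernel: "(\<lambda>(w, y). pker \<eta> (G (fst w) y) (snd w - y)) \<in> borel_measurable ((N \<Otimes>\<^sub>M borel) \<Otimes>\<^sub>M borel)"
    by (simp add: case_prod_beta')
  have inner_gg: "(\<lambda>w. LINT y:{max 0 (snd w - T)..snd w}|lborel. pker \<eta> (G (fst w) y) (snd w - y))
      \<in> borel_measurable (N \<Otimes>\<^sub>M borel)"
    by (rule borel_measurable_LINT_Icc_param[OF kernel]) simp_all
  have inner_hg: "(\<lambda>w. LINT y:{max 0 (snd w - T)..t}|lborel. pker \<eta> (G (fst w) y) (snd w - y))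
      \<in> borel_measurable (N \<Otimes>\<^sub>M borel)"
    by (rule borel_measurable_LINT_Icc_param[OF kernel]) simp_all
  have "(\<lambda>w. pdiff (G (fst w) (snd w))) \<in> borel_measurable (N \<Otimes>\<^sub>M borel)"
    using G by (rule measurable_comp_count_space)
  from borel_measurable_times[OF this inner_gg]
  show "(\<lambda>p. Z_gg \<eta> T t (G p)) \<in> borel_measurable N"
    unfolding Z_gg_def by (intro borel_measurable_LINT_Icc_param) (simp_all add: case_prod_beta')
  have "(\<lambda>w. h (snd w - t)) \<in> (N \<Otimes>\<^sub>M borel) \<rightarrow>\<^sub>M count_space UNIV"
    by (rule measurable_compose[OF _ h]) measurable
  then have "(\<lambda>w. pdiff (h (snd w - t))) \<in> borel_measurable (N \<Otimes>\<^sub>M borel)"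
    by (rule measurable_comp_count_space)
  from borel_measurable_times[OF this inner_hg]
  show "(\<lambda>p. Z_hg \<eta> T t (G p) h) \<in> borel_measurable N"
    unfolding Z_hg_def by (intro borel_measurable_LINT_Icc_param) (simp_all add: case_prod_beta')
qed

lemma borel_measurable_Zf_path_seg:
  assumes r0: "r0 \<in> spins \<times> spins" and h: "spin_path h"
    and \<eta>: "\<eta> \<in> borel_measurable borel" and \<eta>_bound: "\<And>s. norm (\<eta> s) \<le> B"
    and t: "0 \<le> t" and T: "0 \<le> T"
  shows "(\<lambda>\<sigma>. Zf \<eta> T t (path_seg r0 sg \<sigma>) h) \<in> borel_measurable (Pi\<^sub>M {..<length sg} (\<lambda>_. lborel))"
proof -
  let ?N = "Pi\<^sub>M {..<length sg} (\<lambda>_. borel :: real measure)"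
  have "(\<lambda>w. path_seg r0 sg (fst w) (snd w)) \<in> (?N \<Otimes>\<^sub>M borel) \<rightarrow>\<^sub>M count_space UNIV"
    using measurable_path_seg_param[of r0 sg] by (simp add: case_prod_beta')
  note Z_param = borel_measurable_Z_gg_Z_hg_param[where T=T and t=t, OF this spin_pathD(1)[OF h] \<eta>]
  have sets_eq: "sets (Pi\<^sub>M {..<length sg} (\<lambda>_. lborel)) = sets ?N"
    by (intro sets_PiM_cong) auto
  show ?thesis
    unfolding measurable_cong_sets[OF sets_eq refl] Zf_eq_LINT[OF spin_path_path_seg[OF r0] h \<eta> \<eta>_bound t T]
    using Z_param by (intro borel_measurable_diff borel_measurable_uminus borel_measurable_const)
qed

lemma Z_hg_tendsto:
  assumes g: "spin_path g" and h: "spin_path h" and hk: "\<And>k. spin_path (hk k)"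
    and E: "finite E" and agree: "\<And>x. x \<in> {0..T} - E \<Longrightarrow> eventually (\<lambda>k. hk k x = h x) sequentially"
    and \<eta>: "\<eta> \<in> borel_measurable borel" and \<eta>_bound: "\<And>s. norm (\<eta> s) \<le> B" and t: "0 \<le> t"
  shows "(\<lambda>k. Z_hg \<eta> T t g (hk k)) \<longlonglongrightarrow> Z_hg \<eta> T t g h"
proof -
  define I where "I x = (LINT y:{max 0 (x - T)..t}|lborel. pker \<eta> (g y) (x - y))" for x
  have B: "0 \<le> B" using \<eta>_bound[of 0] norm_ge_zero order_trans by blast
  have I_meas: "I \<in> borel_measurable borel"
    unfolding I_def using borel_measurable_pker_path[OF spin_pathD(1)[OF g] \<eta>]
    by (rule borel_measurable_LINT_Icc_param) measurable
  have I_bound: "norm (I x) \<le> 2 * B * t" for x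
    unfolding I_def using B t \<eta>_bound spin_pathD(2)[OF g]
    by (intro norm_LINT_Icc_le norm_pker_le) auto
  have "AE x in lborel. x \<notin> (\<lambda>e. e + t) ` E"
    using E by (intro AE_not_in finite_imp_null_set_lborel) auto
  then have "AE x in lborel. x \<in> {t..t + T} \<longrightarrow>
      (\<lambda>k. pdiff (hk k (x - t)) * I x) \<longlonglongrightarrow> pdiff (h (x - t)) * I x"
  proof eventually_elim
    case (elim x)
    show ?case
    proof
      assume "x \<in> {t..t + T}"
      moreover have "x - t \<notin> E"
        using elim by (metis diff_add_cancel image_eqI)
      ultimately show "(\<lambda>k. pdiff (hk k (x - t)) * I x) \<longlonglongrightarrow> pdiff (h (x - t)) * I x"
        by (intro tendsto_comp_eventually_eq[where \<phi>="\<lambda>v. pdiff v * I x"] agree) auto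
    qed
  qed
  moreover have "norm (pdiff (hk k (x - t)) * I x) \<le> 2 * (2 * B * t)" for k x
    unfolding norm_mult using spin_pathD(2)[OF hk] I_bound B t by (intro mult_mono norm_pdiff_le) auto
  moreover have "(\<lambda>x. pdiff (f (x - t)) * I x) \<in> borel_measurable lborel" if "spin_path f" for f
    using borel_measurable_times[OF borel_measurable_pdiff_shift[OF spin_pathD(1)[OF that]] I_meas]
    by simp
  ultimately show ?thesis
    unfolding Z_hg_def I_def[symmetric] using h hk
    by (intro tendsto_set_integral_dominated[where B="2 * (2 * B * t)"]) simp_all
qed

lemma LINT_pker_path_tendsto:
  assumes h: "spin_path h" and hk: "\<And>k. spin_path (hk k)"
    and E: "finite E" and agree: "\<And>y. y \<in> {0..x} - E \<Longrightarrow> eventually (\<lambda>k. hk k y = h y) sequentially"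
    and \<eta>: "\<eta> \<in> borel_measurable borel" and \<eta>_bound: "\<And>s. norm (\<eta> s) \<le> B"
  shows "(\<lambda>k. LINT y:{0..x}|lborel. pker \<eta> (hk k y) (x - y)) \<longlonglongrightarrow> (LINT y:{0..x}|lborel. pker \<eta> (h y) (x - y))"
proof (rule tendsto_set_integral_dominated[where B="2 * B"])
  show "AE y in lborel. y \<in> {0..x} \<longrightarrow> (\<lambda>k. pker \<eta> (hk k y) (x - y)) \<longlonglongrightarrow> pker \<eta> (h y) (x - y)"
    using AE_not_in[OF finite_imp_null_set_lborel[OF E]]
  proof eventually_elim
    case (elim y)
    then show ?case
      using tendsto_comp_eventually_eq[OF agree, where \<phi>="\<lambda>v. pker \<eta> v (x - y)"] by auto
  qed
qed (use spin_pathD h hk \<eta> \<eta>_bound in \<open>auto intro: borel_measurable_pker norm_pker_le\<close>)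

lemma Z_hh_tendsto:
  assumes h: "spin_path h" and hk: "\<And>k. spin_path (hk k)"
    and E: "finite E" and agree: "\<And>x. x \<in> {0..T} - E \<Longrightarrow> eventually (\<lambda>k. hk k x = h x) sequentially"
    and \<eta>: "\<eta> \<in> borel_measurable borel" and \<eta>_bound: "\<And>s. norm (\<eta> s) \<le> B" and T: "0 \<le> T"
  shows "(\<lambda>k. Z_hh \<eta> T (hk k)) \<longlonglongrightarrow> Z_hh \<eta> T h"
proof -
  define I where "I f x = (LINT y:{0..x}|lborel. pker \<eta> (f y) (x - y))" for f x
  have B: "0 \<le> B" using \<eta>_bound[of 0] norm_ge_zero order_trans by blast
  have I_meas: "I f \<in> borel_measurable borel" if "spin_path f" for f
    unfolding I_def using borel_measurable_pker_path[OF spin_pathD(1)[OF that] \<eta>]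
    by (rule borel_measurable_LINT_Icc_param) measurable
  have I_bound: "norm (I f x) \<le> 2 * B * T" if "spin_path f" "x \<le> T" for f x
    unfolding I_def using B T that \<eta>_bound spin_pathD(2)[OF that(1)]
    by (intro norm_LINT_Icc_le norm_pker_le) auto
  have "AE x in lborel. x \<in> {0..T} \<longrightarrow> (\<lambda>k. pdiff (hk k x) * I (hk k) x) \<longlonglongrightarrow> pdiff (h x) * I h x"
    using AE_not_in[OF finite_imp_null_set_lborel[OF E]]
  proof eventually_elim
    case (elim x)
    show ?case
    proof
      assume x: "x \<in> {0..T}"
      with elim have "(\<lambda>k. pdiff (hk k x)) \<longlonglongrightarrow> pdiff (h x)"
        by (intro tendsto_comp_eventually_eq[where \<phi>=pdiff] agree) auto
      moreover have "(\<lambda>k. I (hk k) x) \<longlonglongrightarrow> I h x"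
        unfolding I_def using x agree by (intro LINT_pker_path_tendsto[OF h hk E _ \<eta> \<eta>_bound]) auto
      ultimately show "(\<lambda>k. pdiff (hk k x) * I (hk k) x) \<longlonglongrightarrow> pdiff (h x) * I h x"
        by (rule tendsto_mult)
    qed
  qed
  moreover have "norm (pdiff (hk k x) * I (hk k) x) \<le> 2 * (2 * B * T)" if "x \<in> {0..T}" for k x
    unfolding norm_mult using spin_pathD(2)[OF hk] I_bound[OF hk] B T that
    by (intro mult_mono norm_pdiff_le) auto
  moreover have "(\<lambda>x. pdiff (f x) * I f x) \<in> borel_measurable borel" if "spin_path f" for f
    using measurable_comp_count_space[OF spin_pathD(1)[OF that], of pdiff] I_meas[OF that] by simp
  ultimately show ?thesis
    unfolding Z_hh_def I_def[symmetric] using h hk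
    by (intro tendsto_set_integral_dominated[where B="2 * (2 * B * T)"]) auto
qed

lemma Zf_tendsto:
  assumes g: "spin_path g" and h: "spin_path h" and hk: "\<And>k. spin_path (hk k)"
    and E: "finite E" and agree: "\<And>x. x \<in> {0..T} - E \<Longrightarrow> eventually (\<lambda>k. hk k x = h x) sequentially"
    and \<eta>: "\<eta> \<in> borel_measurable borel" and \<eta>_bound: "\<And>s. norm (\<eta> s) \<le> B"
    and t: "0 \<le> t" and T: "0 \<le> T"
  shows "(\<lambda>k. Zf \<eta> T t g (hk k)) \<longlonglongrightarrow> Zf \<eta> T t g h"
  unfolding Zf_eq_LINT[OF g hk \<eta> \<eta>_bound t T] Zf_eq_LINT[OF g h \<eta> \<eta>_bound t T]
  by (intro tendsto_diff tendsto_const Z_hg_tendsto[OF g h hk E agree \<eta> \<eta>_bound t]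
      Z_hh_tendsto[OF h hk E agree \<eta> \<eta>_bound T])

section \<open>Amplitudes on the simplex\<close>

definition entry_norm_sum :: "(int \<Rightarrow> int \<Rightarrow> complex) \<Rightarrow> real" where
  "entry_norm_sum H = (\<Sum>a\<in>spins. \<Sum>b\<in>spins. norm (H a b))"

lemma entry_norm_sum_nonneg: "0 \<le> entry_norm_sum H"
  unfolding entry_norm_sum_def by (intro sum_nonneg) auto

lemma norm_entry_le_entry_norm_sum:
  assumes "a \<in> spins" "b \<in> spins"
  shows "norm (H a b) \<le> entry_norm_sum H"
proof -
  have "norm (H a b) \<le> (\<Sum>b\<in>spins. norm (H a b))"
    using assms by (intro member_le_sum) auto
  also have "\<dots> \<le> entry_norm_sum H"
    unfolding entry_norm_sum_def using assms
    by (intro member_le_sum[where f="\<lambda>a. \<Sum>b\<in>spins. norm (H a b)"] sum_nonneg) auto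
  finally show ?thesis .
qed

lemma norm_Eng_le: "r \<in> spins \<times> spins \<Longrightarrow> norm (Eng H r) \<le> 2 * entry_norm_sum H"
  unfolding Eng_def
  using norm_entry_le_entry_norm_sum[of "fst r" "fst r" H] norm_entry_le_entry_norm_sum[of "snd r" "snd r" H]
  by (auto intro!: order_trans[OF norm_triangle_ineq4])

lemma norm_flip_factor_le:
  assumes "r0 \<in> spins \<times> spins"
  shows "norm (flip_factor H r0 sg j) \<le> entry_norm_sum H"
  using states_in_spins[OF assms, of sg j] states_in_spins[OF assms, of sg "j - 1"]
  unfolding flip_factor_def by (auto simp: norm_mult intro!: norm_entry_le_entry_norm_sum)

lemma piece_len_bounds:
  assumes "\<tau> \<in> tsimplex t (length sg)" "0 \<le> t"
  shows "0 \<le> piece_len t sg \<tau> j \<and> piece_len t sg \<tau> j \<le> t"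
proof -
  let ?n = "length sg"
  have pos: "\<And>k. k < ?n \<Longrightarrow> 0 < \<tau> k" using assms by (auto simp: tsimplex_def)
  have "0 \<le> sum \<tau> {..<?n}" using pos by (intro sum_nonneg) (auto intro: less_imp_le)
  moreover have "sum \<tau> {..<?n} \<le> t" using assms by (cases "?n = 0") (auto simp: tsimplex_def)
  moreover have "\<tau> j \<le> sum \<tau> {..<?n}" if "j < ?n"
    using that pos by (intro member_le_sum) (auto intro: less_imp_le)
  ultimately show ?thesis
    using pos by (auto simp: piece_len_def intro: less_imp_le)
qed

definition amp_bound :: "(int \<Rightarrow> int \<Rightarrow> complex) \<Rightarrow> real \<Rightarrow> nat \<Rightarrow> real" where
  "amp_bound H t n = exp (2 * entry_norm_sum H * t) ^ (n + 1) * entry_norm_sum H ^ n"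

lemma amp_bound_nonneg: "0 \<le> amp_bound H t n"
  unfolding amp_bound_def by (simp add: entry_norm_sum_nonneg)

lemma norm_seg_amp_le:
  assumes r0: "r0 \<in> spins \<times> spins" and \<tau>: "\<tau> \<in> tsimplex t (length sg)" and t: "0 \<le> t"
  shows "norm (seg_amp H t r0 sg \<tau>) \<le> amp_bound H t (length sg)"
proof -
  let ?n = "length sg" and ?K = "entry_norm_sum H"
  have "norm (exp (- \<i> * Eng H (states r0 sg j) * complex_of_real (piece_len t sg \<tau> j))) \<le> exp (2 * ?K * t)"
    for j
  proof -
    have l: "0 \<le> piece_len t sg \<tau> j \<and> piece_len t sg \<tau> j \<le> t"
      by (rule piece_len_bounds[OF \<tau> t])
    have "norm (- \<i> * Eng H (states r0 sg j) * complex_of_real (piece_len t sg \<tau> j))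
        = norm (Eng H (states r0 sg j)) * piece_len t sg \<tau> j"
      using l by (simp add: norm_mult)
    also have "\<dots> \<le> 2 * ?K * t"
      using norm_Eng_le[OF states_in_spins[OF r0]] l entry_norm_sum_nonneg by (intro mult_mono) auto
    finally show ?thesis
      using norm_exp by (meson exp_le_cancel_iff order_trans)
  qed
  then have "norm (\<Prod>j\<in>{0..?n}. exp (- \<i> * Eng H (states r0 sg j) * complex_of_real (piece_len t sg \<tau> j)))
      \<le> (\<Prod>j\<in>{0..?n}. exp (2 * ?K * t))"
    unfolding prod_norm[symmetric] by (intro prod_mono) auto
  moreover have "norm (\<Prod>j\<in>{1..?n}. flip_factor H r0 sg j) \<le> (\<Prod>j\<in>{1..?n}. ?K)"
    unfolding prod_norm[symmetric] using norm_flip_factor_le[OF r0] by (intro prod_mono) auto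
  ultimately show ?thesis
    unfolding seg_amp_def norm_mult amp_bound_def by (intro mult_mono) auto
qed

lemma norm_Xf_le:
  assumes "r0 \<in> spins \<times> spins" "\<tau> \<in> tsimplex t (length sg)" "0 \<le> t"
  shows "norm (Xf H \<rho> t r0 sg \<tau>) \<le> entry_norm_sum \<rho> * amp_bound H t (length sg)"
  unfolding Xf_def norm_mult using assms
  by (intro mult_mono norm_entry_le_entry_norm_sum norm_seg_amp_le) (auto simp: entry_norm_sum_nonneg)

lemma eta_bounded: "\<exists>B. \<forall>s. norm (eta \<beta> Jm c m \<omega> s) \<le> B"
proof (intro exI allI)
  fix s
  let ?a = "\<lambda>j. complex_of_real (1 / pi * (pi / 2 * (c j)\<^sup>2 / (m j * \<omega> j)))"
  let ?k = "\<lambda>j. cosh (\<beta> * \<omega> j / 2) / sinh (\<beta> * \<omega> j / 2)"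
  have oscillation_bound: "norm (complex_of_real (?k j * cos (\<omega> j * s)) - \<i> * complex_of_real (sin (\<omega> j * s)))
      \<le> \<bar>?k j\<bar> + 1" for j
  proof -
    have "\<bar>?k j * cos (\<omega> j * s)\<bar> \<le> \<bar>?k j\<bar> * 1"
      unfolding abs_mult by (intro mult_left_mono) auto
    then have "norm (complex_of_real (?k j * cos (\<omega> j * s))) \<le> \<bar>?k j\<bar>"
      unfolding norm_of_real by simp
    moreover have "norm (\<i> * complex_of_real (sin (\<omega> j * s))) \<le> 1"
      by (simp add: norm_mult)
    ultimately show ?thesis
      using norm_triangle_ineq4[of "complex_of_real (?k j * cos (\<omega> j * s))" "\<i> * complex_of_real (sin (\<omega> j * s))"]
      by linarith
  qed
  show "norm (eta \<beta> Jm c m \<omega> s) \<le> (\<Sum>j\<in>Jm. norm (?a j) * (\<bar>?k j\<bar> + 1))"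
    unfolding eta_def
  proof (intro order_trans[OF norm_sum sum_mono])
    fix j
    show "norm (?a j * (complex_of_real (?k j * cos (\<omega> j * s)) - \<i> * complex_of_real (sin (\<omega> j * s))))
        \<le> norm (?a j) * (\<bar>?k j\<bar> + 1)"
      unfolding norm_mult by (intro mult_left_mono oscillation_bound) auto
  qed
qed

lemma borel_measurable_eta: "eta \<beta> Jm c m \<omega> \<in> borel_measurable borel"
  unfolding eta_def by (intro borel_measurable_continuous_onI continuous_intros)

lemma space_PiM_lborel: "space (Pi\<^sub>M I (\<lambda>_. lborel)) = extensional I"
  by (auto simp: space_PiM PiE_def Pi_def)

lemma tsimplex_sets: "tsimplex L n \<in> sets (Pi\<^sub>M {..<n} (\<lambda>_. lborel))"
proof -
  have "tsimplex L n = Pi\<^sub>E {..<n} (\<lambda>_. {0<..})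
      \<inter> (if 0 < n then (\<lambda>x. sum x {..<n}) -` {..<L} else UNIV) \<inter> space (Pi\<^sub>M {..<n} (\<lambda>_. lborel))"
    by (auto simp: tsimplex_def space_PiM_lborel PiE_def Pi_def)
  then show ?thesis by simp measurable
qed

lemma emeasure_tsimplex_le:
  assumes "0 \<le> t"
  shows "emeasure (Pi\<^sub>M {..<n} (\<lambda>_. lborel)) (tsimplex t n) \<le> ennreal (t ^ n / fact n)"
proof -
  let ?S = "{x. (\<forall>i\<in>{..<n}. 0 \<le> x i) \<and> sum x {..<n} \<le> t} \<inter> space (Pi\<^sub>M {..<n} (\<lambda>_. lborel))"
  have "?S = Pi\<^sub>E {..<n} (\<lambda>_. {0..}) \<inter> (\<lambda>x. sum x {..<n}) -` {..t} \<inter> space (Pi\<^sub>M {..<n} (\<lambda>_. lborel))"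
    by (auto simp: space_PiM_lborel PiE_def Pi_def)
  then have "?S \<in> sets (Pi\<^sub>M {..<n} (\<lambda>_. lborel))" by simp measurable
  moreover have "tsimplex t n \<subseteq> ?S"
    using assms by (auto simp: tsimplex_def space_PiM_lborel less_imp_le split: if_splits)
  ultimately have "emeasure (Pi\<^sub>M {..<n} (\<lambda>_. lborel)) (tsimplex t n) \<le> emeasure (Pi\<^sub>M {..<n} (\<lambda>_. lborel)) ?S"
    by (rule emeasure_mono[rotated])
  also have "\<dots> = ennreal (t ^ n / fact n)"
    using emeasure_std_simplex_aux[of "{..<n}" t] assms by simp
  finally show ?thesis .
qed

lemma emeasure_tsimplex_less_top: "0 \<le> t \<Longrightarrow> emeasure (Pi\<^sub>M {..<n} (\<lambda>_. lborel)) (tsimplex t n) < \<infinity>"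
  using emeasure_tsimplex_le[of t n] by (auto simp: less_top[symmetric] top_unique intro: le_less_trans)

lemma measure_tsimplex_le:
  assumes "0 \<le> t"
  shows "measure (Pi\<^sub>M {..<n} (\<lambda>_. lborel)) (tsimplex t n) \<le> t ^ n / fact n"
  using enn2real_mono[OF emeasure_tsimplex_le[OF assms, of n]] assms by (simp add: measure_def)

lemma borel_measurable_piece_len [measurable]:
  "(\<lambda>\<tau>. piece_len L sg \<tau> j) \<in> borel_measurable (Pi\<^sub>M {..<length sg} (\<lambda>_. lborel))"
proof -
  have [measurable]: "(\<lambda>\<tau>. \<tau> k) \<in> borel_measurable (Pi\<^sub>M {..<length sg} (\<lambda>_. lborel))"
    if "k \<in> {..<length sg}" for k
    using measurable_component_singleton[OF that, of "\<lambda>_. lborel"] by simp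
  then have "(\<lambda>\<tau>. \<Sum>k<length sg. \<tau> k) \<in> borel_measurable (Pi\<^sub>M {..<length sg} (\<lambda>_. lborel))"
    by (rule borel_measurable_sum)
  then show ?thesis
    unfolding piece_len_def by (cases "j < length sg") auto
qed

lemma borel_measurable_Xf:
  "(\<lambda>\<tau>. Xf H \<rho> t r0 sg \<tau>) \<in> borel_measurable (Pi\<^sub>M {..<length sg} (\<lambda>_. lborel))"
  unfolding Xf_def seg_amp_def by measurable

section \<open>The series over bath segments\<close>

definition bath_term :: "(int \<Rightarrow> int \<Rightarrow> complex) \<Rightarrow> (int \<Rightarrow> int \<Rightarrow> complex) \<Rightarrow> (real \<Rightarrow> complex)
    \<Rightarrow> real \<Rightarrow> real \<Rightarrow> int \<times> int \<Rightarrow> (real \<Rightarrow> int \<times> int) \<Rightarrow> nat \<Rightarrow> complex" where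
  "bath_term H \<rho> \<eta> T t r0 h n = (\<Sum>rt0\<in>spins \<times> spins. \<Sum>sgt\<in>{xs :: bool list. length xs = n}.
        LINT \<sigma> : tsimplex t n | Pi\<^sub>M {..<n} (\<lambda>_. lborel).
          Xf H \<rho> t rt0 sgt \<sigma> * (if final_state rt0 sgt = r0 then 1 else 0)
          * exp (Zf \<eta> T t (path_seg rt0 sgt \<sigma>) h))"

lemma Aamp_eq_suminf_bath_term:
  assumes "summable (bath_term H \<rho> \<eta> T t r0 (path_seg r0 sg \<tau>))"
  shows "Aamp H \<rho> \<eta> T sg r0 t \<tau> = Yf H T r0 sg \<tau> * (\<Sum>n. bath_term H \<rho> \<eta> T t r0 (path_seg r0 sg \<tau>) n)"
proof -
  have pull_out: "(LINT x:A|M. f x * c * Y * g x) = Y * (LINT x:A|M. f x * c * g x)"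
    for A M f g and c Y :: complex
  proof -
    have "(\<lambda>x. f x * c * Y * g x) = (\<lambda>x. Y * (f x * c * g x))"
      by (auto simp: fun_eq_iff mult_ac)
    then show ?thesis by (simp add: set_integral_mult_right)
  qed
  have "Aamp H \<rho> \<eta> T sg r0 t \<tau> = (\<Sum>n. Yf H T r0 sg \<tau> * bath_term H \<rho> \<eta> T t r0 (path_seg r0 sg \<tau>) n)"
    unfolding Aamp_def bath_term_def sum_distrib_left pull_out ..
  also have "\<dots> = Yf H T r0 sg \<tau> * (\<Sum>n. bath_term H \<rho> \<eta> T t r0 (path_seg r0 sg \<tau>) n)"
    by (rule suminf_mult[OF assms])
  finally show ?thesis .
qed

lemma norm_bath_integrand_le:
  assumes "rt0 \<in> spins \<times> spins" "\<sigma> \<in> tsimplex t (length sgt)" "\<And>x. h x \<in> spins \<times> spins"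
    and "\<And>s. norm (\<eta> s) \<le> B" "0 \<le> t" "0 \<le> T"
  shows "norm (Xf H \<rho> t rt0 sgt \<sigma> * c * exp (Zf \<eta> T t (path_seg rt0 sgt \<sigma>) h))
    \<le> entry_norm_sum \<rho> * amp_bound H t (length sgt) * norm c * exp (4 * B * (t * t + t * T + T * T))"
  unfolding norm_mult using assms path_seg_in_spins
  by (intro mult_mono norm_Xf_le norm_exp_Zf_le) (auto simp: entry_norm_sum_nonneg amp_bound_nonneg)

definition bath_term_bound :: "(int \<Rightarrow> int \<Rightarrow> complex) \<Rightarrow> (int \<Rightarrow> int \<Rightarrow> complex) \<Rightarrow> real \<Rightarrow> real \<Rightarrow> real
    \<Rightarrow> nat \<Rightarrow> real" where
  "bath_term_bound H \<rho> B T t n = 4 * 2 ^ n *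
     (entry_norm_sum \<rho> * amp_bound H t n * exp (4 * B * (t * t + t * T + T * T)) * (t ^ n / fact n))"

lemma norm_bath_term_le:
  assumes h: "\<And>x. h x \<in> spins \<times> spins" and \<eta>_bound: "\<And>s. norm (\<eta> s) \<le> B"
    and t: "0 \<le> t" and T: "0 \<le> T"
  shows "norm (bath_term H \<rho> \<eta> T t r0 h n) \<le> bath_term_bound H \<rho> B T t n"
proof -
  let ?C = "entry_norm_sum \<rho> * amp_bound H t n * exp (4 * B * (t * t + t * T + T * T))"
  have C: "0 \<le> ?C" by (simp add: entry_norm_sum_nonneg amp_bound_nonneg)
  have integral_bound: "norm (LINT \<sigma> : tsimplex t n | Pi\<^sub>M {..<n} (\<lambda>_. lborel).
        Xf H \<rho> t rt0 sgt \<sigma> * (if final_state rt0 sgt = r0 then 1 else 0)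
        * exp (Zf \<eta> T t (path_seg rt0 sgt \<sigma>) h)) \<le> ?C * (t ^ n / fact n)"
    if rt0: "rt0 \<in> spins \<times> spins" and sgt: "length sgt = n" for rt0 sgt
  proof -
    have "norm (LINT \<sigma> : tsimplex t n | Pi\<^sub>M {..<n} (\<lambda>_. lborel).
        Xf H \<rho> t rt0 sgt \<sigma> * (if final_state rt0 sgt = r0 then 1 else 0)
        * exp (Zf \<eta> T t (path_seg rt0 sgt \<sigma>) h)) \<le> ?C * measure (Pi\<^sub>M {..<n} (\<lambda>_. lborel)) (tsimplex t n)"
    proof (rule norm_set_integral_le_measure[OF tsimplex_sets emeasure_tsimplex_less_top[OF t] C])
      fix \<sigma> assume "\<sigma> \<in> tsimplex t n"
      then show "norm (Xf H \<rho> t rt0 sgt \<sigma> * (if final_state rt0 sgt = r0 then 1 else 0)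
          * exp (Zf \<eta> T t (path_seg rt0 sgt \<sigma>) h)) \<le> ?C"
        using norm_bath_integrand_le[OF rt0 _ h \<eta>_bound t T, of \<sigma> sgt H \<rho> "if final_state rt0 sgt = r0 then 1 else 0"]
          sgt C by auto
    qed
    also have "\<dots> \<le> ?C * (t ^ n / fact n)"
      by (intro mult_left_mono measure_tsimplex_le t C)
    finally show ?thesis .
  qed
  have "norm (bath_term H \<rho> \<eta> T t r0 h n)
      \<le> (\<Sum>rt0\<in>spins \<times> spins. \<Sum>sgt\<in>{xs :: bool list. length xs = n}. ?C * (t ^ n / fact n))"
    unfolding bath_term_def
    by (intro order_trans[OF norm_sum sum_mono] order_trans[OF norm_sum sum_mono] integral_bound) auto
  also have "\<dots> = bath_term_bound H \<rho> B T t n"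
    using card_lists_length_eq[of "UNIV :: bool set" n]
    by (simp add: bath_term_bound_def spins_def card_cartesian_product)
  finally show ?thesis .
qed

lemma summable_bath_term_bound: "summable (bath_term_bound H \<rho> B T t)"
proof -
  define K where "K = 2 * exp (2 * entry_norm_sum H * t) * entry_norm_sum H * t"
  define C where "C = 4 * entry_norm_sum \<rho> * exp (2 * entry_norm_sum H * t) * exp (4 * B * (t * t + t * T + T * T))"
  have "bath_term_bound H \<rho> B T t = (\<lambda>n. C * (K ^ n /\<^sub>R fact n))"
    by (simp add: fun_eq_iff bath_term_bound_def amp_bound_def K_def C_def power_mult_distrib
        power_add mult_ac divide_inverse)
  then show ?thesis
    by (simp only:) (intro summable_mult summable_exp_generic)
qed

lemma summable_bath_term:
  assumes "\<And>x. h x \<in> spins \<times> spins" "\<And>s. norm (\<eta> s) \<le> B" "0 \<le> t" "0 \<le> T"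
  shows "summable (bath_term H \<rho> \<eta> T t r0 h)"
  by (rule summable_comparison_test'[OF summable_bath_term_bound[of H \<rho> B T t], of 0])
     (use norm_bath_term_le[OF assms] in auto)

lemma bath_integral_tendsto:
  assumes rt0: "rt0 \<in> spins \<times> spins" and n: "length sgt = n"
    and h: "spin_path h" and hk: "\<And>k. spin_path (hk k)"
    and E: "finite E" and agree: "\<And>x. x \<in> {0..T} - E \<Longrightarrow> eventually (\<lambda>k. hk k x = h x) sequentially"
    and \<eta>: "\<eta> \<in> borel_measurable borel" and \<eta>_bound: "\<And>s. norm (\<eta> s) \<le> B"
    and t: "0 \<le> t" and T: "0 \<le> T"
  shows "(\<lambda>k. LINT \<sigma> : tsimplex t n | Pi\<^sub>M {..<n} (\<lambda>_. lborel).
            Xf H \<rho> t rt0 sgt \<sigma> * c * exp (Zf \<eta> T t (path_seg rt0 sgt \<sigma>) (hk k)))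
     \<longlonglongrightarrow> (LINT \<sigma> : tsimplex t n | Pi\<^sub>M {..<n} (\<lambda>_. lborel).
            Xf H \<rho> t rt0 sgt \<sigma> * c * exp (Zf \<eta> T t (path_seg rt0 sgt \<sigma>) h))"
proof (rule tendsto_set_integral_dominated[OF tsimplex_sets emeasure_tsimplex_less_top[OF t]])
  have [measurable]: "(\<lambda>\<sigma>. Xf H \<rho> t rt0 sgt \<sigma>) \<in> borel_measurable (Pi\<^sub>M {..<n} (\<lambda>_. lborel))"
    "(\<lambda>\<sigma>. Zf \<eta> T t (path_seg rt0 sgt \<sigma>) h) \<in> borel_measurable (Pi\<^sub>M {..<n} (\<lambda>_. lborel))"
    "(\<lambda>\<sigma>. Zf \<eta> T t (path_seg rt0 sgt \<sigma>) (hk k)) \<in> borel_measurable (Pi\<^sub>M {..<n} (\<lambda>_. lborel))"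
    "exp \<in> borel_measurable (borel :: complex measure)" for k
    using borel_measurable_Xf[of H \<rho> t rt0 sgt] n
      borel_measurable_Zf_path_seg[OF rt0 h \<eta> \<eta>_bound t T, of sgt]
      borel_measurable_Zf_path_seg[OF rt0 hk \<eta> \<eta>_bound t T, of sgt]
    by (auto intro: borel_measurable_continuous_onI continuous_intros)
  show "(\<lambda>\<sigma>. Xf H \<rho> t rt0 sgt \<sigma> * c * exp (Zf \<eta> T t (path_seg rt0 sgt \<sigma>) (hk k)))
      \<in> borel_measurable (Pi\<^sub>M {..<n} (\<lambda>_. lborel))" for k
    by measurable
  show "(\<lambda>\<sigma>. Xf H \<rho> t rt0 sgt \<sigma> * c * exp (Zf \<eta> T t (path_seg rt0 sgt \<sigma>) h))
      \<in> borel_measurable (Pi\<^sub>M {..<n} (\<lambda>_. lborel))"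
    by measurable
  show "norm (Xf H \<rho> t rt0 sgt \<sigma> * c * exp (Zf \<eta> T t (path_seg rt0 sgt \<sigma>) (hk k)))
      \<le> entry_norm_sum \<rho> * amp_bound H t n * norm c * exp (4 * B * (t * t + t * T + T * T))"
    if "\<sigma> \<in> tsimplex t n" for k \<sigma>
    using norm_bath_integrand_le[OF rt0 _ spin_pathD(2)[OF hk] \<eta>_bound t T] that n by auto
  show "AE \<sigma> in Pi\<^sub>M {..<n} (\<lambda>_. lborel). \<sigma> \<in> tsimplex t n \<longrightarrow>
      (\<lambda>k. Xf H \<rho> t rt0 sgt \<sigma> * c * exp (Zf \<eta> T t (path_seg rt0 sgt \<sigma>) (hk k)))
      \<longlonglongrightarrow> Xf H \<rho> t rt0 sgt \<sigma> * c * exp (Zf \<eta> T t (path_seg rt0 sgt \<sigma>) h)"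
    by (intro AE_I2 impI tendsto_intros
        Zf_tendsto[OF spin_path_path_seg[OF rt0] h hk E agree \<eta> \<eta>_bound t T])
qed

lemma suminf_bath_term_tendsto:
  assumes h: "spin_path h" and hk: "\<And>k. spin_path (hk k)"
    and E: "finite E" and agree: "\<And>x. x \<in> {0..T} - E \<Longrightarrow> eventually (\<lambda>k. hk k x = h x) sequentially"
    and \<eta>: "\<eta> \<in> borel_measurable borel" and \<eta>_bound: "\<And>s. norm (\<eta> s) \<le> B"
    and t: "0 \<le> t" and T: "0 \<le> T"
  shows "(\<lambda>k. \<Sum>n. bath_term H \<rho> \<eta> T t r0 (hk k) n) \<longlonglongrightarrow> (\<Sum>n. bath_term H \<rho> \<eta> T t r0 h n)"
proof -
  have "(\<lambda>k. bath_term H \<rho> \<eta> T t r0 (hk k) n) \<longlonglongrightarrow> bath_term H \<rho> \<eta> T t r0 h n" for n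
    unfolding bath_term_def
    by (intro tendsto_sum bath_integral_tendsto[OF _ _ h hk E agree \<eta> \<eta>_bound t T]) auto
  moreover have "\<forall>\<^sub>F (n, k) in at_top \<times>\<^sub>F sequentially.
      norm (bath_term H \<rho> \<eta> T t r0 (hk k) n) \<le> bath_term_bound H \<rho> B T t n"
    using norm_bath_term_le[OF spin_pathD(2)[OF hk] \<eta>_bound t T] by (intro always_eventually) auto
  ultimately show ?thesis
    using tannerys_theorem[where a="\<lambda>n k. bath_term H \<rho> \<eta> T t r0 (hk k) n" and F=sequentially,
        OF _ _ summable_bath_term_bound]
    by simp
qed

section \<open>Approaching the face of the simplex\<close>

lemma eventually_partial_sum_le_iff:
  fixes X :: "nat \<Rightarrow> nat \<Rightarrow> real"
  assumes X: "X \<longlonglongrightarrow> \<tau>(d := T - sum \<tau> {..<d})" and j: "j \<in> {1..Suc d}"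
    and x: "x \<in> {0..<T} - (\<lambda>j. sum \<tau> {..<j}) ` {1..d}"
  shows "eventually (\<lambda>k. sum (X k) {..<j} \<le> x \<longleftrightarrow> j \<le> d \<and> sum \<tau> {..<j} \<le> x) sequentially"
proof -
  let ?\<sigma> = "\<tau>(d := T - sum \<tau> {..<d})"
  have lim: "(\<lambda>k. sum (X k) {..<j}) \<longlonglongrightarrow> sum ?\<sigma> {..<j}"
    using X by (intro tendsto_sum tendsto_coordinate)
  show ?thesis
  proof (cases "j \<le> d")
    case True
    then have same: "sum ?\<sigma> {..<j} = sum \<tau> {..<j}"
      by (intro sum.cong) auto
    have "sum \<tau> {..<j} \<noteq> x"
      using x j True by auto
    then consider "sum ?\<sigma> {..<j} < x" | "x < sum ?\<sigma> {..<j}"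
      unfolding same by linarith
    then show ?thesis
    proof cases
      case 1
      from order_tendstoD(2)[OF lim 1] show ?thesis
        using True 1 unfolding same by (auto elim!: eventually_mono)
    next
      case 2
      from order_tendstoD(1)[OF lim 2] show ?thesis
        using True 2 unfolding same by (auto elim!: eventually_mono)
    qed
  next
    case False
    then have "j = Suc d" using j by auto
    moreover have "sum ?\<sigma> {..<d} = sum \<tau> {..<d}"
      by (intro sum.cong) auto
    ultimately have "x < sum ?\<sigma> {..<j}"
      using x by simp
    from order_tendstoD(1)[OF lim this] show ?thesis
      using False by (auto elim!: eventually_mono)
  qed
qed

lemma path_seg_eventually_eq:
  fixes X :: "nat \<Rightarrow> nat \<Rightarrow> real"
  assumes X: "X \<longlonglongrightarrow> \<tau>(d := T - sum \<tau> {..<d})" and len: "length sg = Suc d"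
    and x: "x \<in> {0..<T} - (\<lambda>j. sum \<tau> {..<j}) ` {1..d}"
  shows "eventually (\<lambda>k. path_seg r0 sg (X k) x = path_seg r0 (take d sg) \<tau> x) sequentially"
proof -
  have "eventually (\<lambda>k. \<forall>j\<in>{1..Suc d}. sum (X k) {..<j} \<le> x \<longleftrightarrow> j \<le> d \<and> sum \<tau> {..<j} \<le> x) sequentially"
    using eventually_partial_sum_le_iff[OF X _ x] by (intro eventually_ball_finite) auto
  then show ?thesis
  proof eventually_elim
    case (elim k)
    let ?J = "{j \<in> {1..length (take d sg)}. sum \<tau> {..<j} \<le> x}"
    have "{j \<in> {1..length sg}. sum (X k) {..<j} \<le> x} = ?J"
      using elim len by auto
    moreover have "card ?J \<le> card {1..d}"
      using len by (intro card_mono) auto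
    ultimately show ?case
      unfolding path_seg_def by (simp add: states_take)
  qed
qed

lemma piece_len_tendsto:
  fixes X :: "nat \<Rightarrow> nat \<Rightarrow> real"
  assumes X: "X \<longlonglongrightarrow> \<tau>(d := T - sum \<tau> {..<d})" and len: "length sg = Suc d"
  shows "(\<lambda>k. piece_len T sg (X k) j) \<longlonglongrightarrow> (if j \<le> d then piece_len T (take d sg) \<tau> j else 0)"
proof -
  let ?\<sigma> = "\<tau>(d := T - sum \<tau> {..<d})"
  have same: "sum ?\<sigma> {..<d} = sum \<tau> {..<d}"
    by (intro sum.cong) auto
  show ?thesis
  proof (cases "j \<le> d")
    case True
    have "(\<lambda>k. X k j) \<longlonglongrightarrow> ?\<sigma> j"
      using X by (rule tendsto_coordinate)
    then show ?thesis
      using True len by (auto simp: piece_len_def)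
  next
    case False
    have "(\<lambda>k. T - sum (X k) {..<Suc d}) \<longlonglongrightarrow> T - sum ?\<sigma> {..<Suc d}"
      using X by (intro tendsto_intros tendsto_coordinate)
    then show ?thesis
      using False len same by (simp add: piece_len_def)
  qed
qed

lemma Yf_tendsto:
  fixes X :: "nat \<Rightarrow> nat \<Rightarrow> real"
  assumes X: "X \<longlonglongrightarrow> \<tau>(d := T - sum \<tau> {..<d})" and len: "length sg = Suc d"
  shows "(\<lambda>k. Yf H T r0 sg (X k)) \<longlonglongrightarrow> Yf H T r0 (take d sg) \<tau> * flip_factor H r0 sg (Suc d)"
proof -
  define e where "e s \<sigma> j = exp (- \<i> * Eng H (states r0 sg j) * complex_of_real (piece_len T s \<sigma> j))"
    for s \<sigma> j
  have len_take: "length (take d sg) = d"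
    using len by simp
  have Y_split: "Yf H T r0 sg \<sigma> = ((\<Prod>j\<in>{0..d}. e sg \<sigma> j) * e sg \<sigma> (Suc d))
      * ((\<Prod>j\<in>{1..d}. flip_factor H r0 sg j) * flip_factor H r0 sg (Suc d))" for \<sigma>
    unfolding Yf_def seg_amp_def len e_def by (simp add: prod.cl_ivl_Suc)
  have Y_take: "Yf H T r0 (take d sg) \<tau> = (\<Prod>j\<in>{0..d}. e (take d sg) \<tau> j) * (\<Prod>j\<in>{1..d}. flip_factor H r0 sg j)"
    unfolding Yf_def seg_amp_def len_take e_def
    by (intro arg_cong2[where f="(*)"] prod.cong) (auto simp: states_take flip_factor_take)
  have "(\<lambda>k. e sg (X k) j) \<longlonglongrightarrow> e (take d sg) \<tau> j" if "j \<in> {0..d}" for j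
    unfolding e_def using piece_len_tendsto[OF X len, of j] that by (auto intro!: tendsto_intros)
  moreover have "(\<lambda>k. e sg (X k) (Suc d)) \<longlonglongrightarrow> 1"
    unfolding e_def using piece_len_tendsto[OF X len, of "Suc d"]
    by (auto intro!: tendsto_eq_intros)
  ultimately have "(\<lambda>k. Yf H T r0 sg (X k)) \<longlonglongrightarrow> ((\<Prod>j\<in>{0..d}. e (take d sg) \<tau> j) * 1)
      * ((\<Prod>j\<in>{1..d}. flip_factor H r0 sg j) * flip_factor H r0 sg (Suc d))"
    unfolding Y_split by (intro tendsto_mult tendsto_prod tendsto_const) auto
  then show ?thesis
    unfolding Y_take by (simp add: mult_ac)
qed

lemma Aamp_tendsto_face:
  fixes X :: "nat \<Rightarrow> nat \<Rightarrow> real"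
  assumes X: "X \<longlonglongrightarrow> \<tau>(d := T - sum \<tau> {..<d})" and len: "length sg = Suc d"
    and r0: "r0 \<in> spins \<times> spins"
    and \<eta>: "\<eta> \<in> borel_measurable borel" and \<eta>_bound: "\<And>s. norm (\<eta> s) \<le> B"
    and t: "0 \<le> t" and T: "0 \<le> T"
  shows "(\<lambda>k. Aamp H \<rho> \<eta> T sg r0 t (X k))
    \<longlonglongrightarrow> Aamp H \<rho> \<eta> T (take d sg) r0 t \<tau> * flip_factor H r0 sg (Suc d)"
proof -
  let ?h = "path_seg r0 (take d sg) \<tau>" and ?hk = "\<lambda>k. path_seg r0 sg (X k)"
  let ?E = "(\<lambda>j. sum \<tau> {..<j}) ` {1..d} \<union> {T}"
  have agree: "eventually (\<lambda>k. ?hk k x = ?h x) sequentially" if "x \<in> {0..T} - ?E" for x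
    using that by (intro path_seg_eventually_eq[OF X len]) auto
  have "(\<lambda>k. \<Sum>n. bath_term H \<rho> \<eta> T t r0 (?hk k) n) \<longlonglongrightarrow> (\<Sum>n. bath_term H \<rho> \<eta> T t r0 ?h n)"
    by (rule suminf_bath_term_tendsto[where E="?E", OF spin_path_path_seg[OF r0] spin_path_path_seg[OF r0] _ agree
          \<eta> \<eta>_bound t T]) simp
  with Yf_tendsto[OF X len]
  have "(\<lambda>k. Yf H T r0 sg (X k) * (\<Sum>n. bath_term H \<rho> \<eta> T t r0 (?hk k) n))
      \<longlonglongrightarrow> Yf H T r0 (take d sg) \<tau> * flip_factor H r0 sg (Suc d) * (\<Sum>n. bath_term H \<rho> \<eta> T t r0 ?h n)"
    by (rule tendsto_mult)
  moreover have "summable (bath_term H \<rho> \<eta> T t r0 (path_seg r0 sg' \<sigma>))" for sg' \<sigma>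
    using path_seg_in_spins[OF r0] by (intro summable_bath_term[OF _ \<eta>_bound t T])
  ultimately show ?thesis
    by (simp add: Aamp_eq_suminf_bath_term mult_ac)
qed

theorem theorem4p2:
  fixes H0 \<rho>0 :: "int \<Rightarrow> int \<Rightarrow> complex"
    and Jm :: "'j set" and c m \<omega> :: "'j \<Rightarrow> real"
    and \<beta> T t :: real and D :: nat and sg :: "bool list"
    and \<tau> :: "nat \<Rightarrow> real" and rp rm :: int
  assumes herm: "\<forall>a\<in>spins. \<forall>b\<in>spins. H0 a b = cnj (H0 b a)"
    and finJ: "finite Jm" and om_pos: "\<forall>j\<in>Jm. 0 < \<omega> j"
    and beta_pos: "0 < \<beta>" and T_pos: "0 < T"
    and t_nonneg: "0 \<le> t"
    and D_ge: "1 \<le> D" and sg_len: "length sg = D"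
    and tau_in: "\<tau> \<in> tsimplex T (D - 1)"
    and r_in: "rp \<in> spins" "rm \<in> spins"
  shows
    "((\<lambda>\<tau>'. Aamp H0 \<rho>0 (eta \<beta> Jm c m \<omega>) T sg (rp, rm) t \<tau>')
       \<longlongrightarrow>
       Aamp H0 \<rho>0 (eta \<beta> Jm c m \<omega>) T (take (D - 1) sg) (rp, rm) t \<tau>
       * ((if sg ! (D - 1) then - \<i> * H0 (fst (final_state (rp, rm) sg)) (hat (fst (final_state (rp, rm) sg))) else 0)
          + (if \<not> sg ! (D - 1) then \<i> * H0 (hat (snd (final_state (rp, rm) sg))) (snd (final_state (rp, rm) sg)) else 0)))
     (at (\<tau>(D - 1 := T - (\<Sum>k<D - 1. \<tau> k))) within tsimplex T D)"
proof -
  obtain B where \<eta>_bound: "\<And>s. norm (eta \<beta> Jm c m \<omega> s) \<le> B"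
    using eta_bounded by blast
  have len: "length sg = Suc (D - 1)"
    using D_ge sg_len by simp
  have r0: "(rp, rm) \<in> spins \<times> spins"
    using r_in by simp
  show ?thesis
    unfolding flip_factor_last[OF len, symmetric] tendsto_at_iff_sequentially comp_def
    using Aamp_tendsto_face[OF _ len r0 borel_measurable_eta \<eta>_bound t_nonneg] T_pos
    by auto
qed

end
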